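(* Let $\mathbbm{k}$ be a field and let $f_1, f_2, \ldots, f_m \in \mathbbm{k}[x_1, \dots, x_n]$. Let $$Z(f_1, \ldots, f_m) := \{X \in \mathbbm{k}^{n \times n} \mid (H_{f_i}X)^T = H_{f_i}X \text{ for all } 1 \le i \le m\},$$ where $H_{f_i}$ is the Hessian matrix of $f_i$, and for $X, Y \in Z(f_1,\ldots,f_m)$ put $X \odot Y = \frac{1}{2}(XY + YX)$. Then: (1) $(Z(f_1, \ldots, f_m), \odot)$ is a special Jordan algebra; more precisely, it is closed under $\odot$ and is a Jordan subalgebra of $(\mathbbm{k}^{n\times n})^+$. (2) If the coefficients of $f_1, \ldots, f_m$ are generic and at least one of the $f_i$ has degree not less than $3$, then $(Z(f_1, \ldots, f_m), \odot) \cong \mathbbm{k}$.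
   Context: The Hessian matrix $H_f$ of $f\in\mathbbm{k}[x_1,\dots,x_n]$ is the $n\times n$ matrix of second partial derivatives $\partial^2 f/\partial x_i\partial x_j$ (with entries in the polynomial ring); the condition $(H_fX)^T=H_fX$ is an identity of matrices over $\mathbbm{k}[x_1,\dots,x_n]$. A Jordan algebra is a vector space with a bilinear product $\odot$ satisfying $X\odot Y=Y\odot X$ and $(X^2\odot Y)\odot X = X^2\odot(Y\odot X)$. For an associative algebra $A$, $A^+$ denotes the Jordan algebra on $A$ with product $X\odot Y=\frac12(XY+YX)$; a Jordan algebra is special if it is isomorphic to a Jordan subalgebra of some $A^+$. "Generic" is meant in the algebro-geometric sense: there is a nonzero polynomial in the coefficients of $f_1,\dots,f_m$ (for fixed degrees) such that the conclusion holds whenever this polynomial does not vanish at the coefficients. *)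

theory Defs
  imports "HOL-Analysis.Analysis" "HOL-Library.Poly_Mapping"
begin

text \<open>Multivariate polynomials over 'a in the variables indexed by the finite type 'n
  (so n = CARD('n)): finitely supported maps from monomials (exponent vectors) to
  coefficients, with the convolution product of HOL-Library.Poly_Mapping.\<close>

type_synonym ('n, 'a) mpoly = "('n \<Rightarrow>\<^sub>0 nat) \<Rightarrow>\<^sub>0 'a"

definition mconst :: "'a::zero \<Rightarrow> ('n, 'a) mpoly" where
  "mconst c = Poly_Mapping.single 0 c"

definition pdiff :: "'n \<Rightarrow> ('n, 'a::comm_ring_1) mpoly \<Rightarrow> ('n, 'a) mpoly" where
  "pdiff i p = Abs_poly_mapping
     (\<lambda>\<alpha>::'n \<Rightarrow>\<^sub>0 nat. of_nat (Poly_Mapping.lookup \<alpha> i + 1) * Poly_Mapping.lookup p (\<alpha> + Poly_Mapping.single i (1::nat)))"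

definition hessian :: "('n::finite, 'a::comm_ring_1) mpoly \<Rightarrow> (('n, 'a) mpoly) ^'n ^'n" where
  "hessian f = (\<chi> i j. pdiff i (pdiff j f))"

definition const_mat :: "'a::zero ^'n ^'n \<Rightarrow> (('n, 'a) mpoly) ^'n ^'n" where
  "const_mat X = (\<chi> i j. mconst (X $ i $ j))"

definition Zset :: "nat \<Rightarrow> (nat \<Rightarrow> ('n::finite, 'a::comm_ring_1) mpoly) \<Rightarrow> ('a ^'n ^'n) set" where
  "Zset m f = {X. \<forall>i<m. transpose (hessian (f i) ** const_mat X) = hessian (f i) ** const_mat X}"

definition jprod :: "'a::field ^'n::finite ^'n \<Rightarrow> 'a ^'n ^'n \<Rightarrow> 'a ^'n ^'n" where
  "jprod X Y = (\<chi> i j. (X ** Y + Y ** X) $ i $ j / 2)"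

definition smat :: "'a::times \<Rightarrow> 'a ^'n ^'n \<Rightarrow> 'a ^'n ^'n" where
  "smat c X = (\<chi> i j. c * X $ i $ j)"

definition jordan_subalgebra :: "('a::field ^'n::finite ^'n) set \<Rightarrow> bool" where
  "jordan_subalgebra S \<longleftrightarrow> 0 \<in> S \<and> (\<forall>X\<in>S. \<forall>Y\<in>S. X + Y \<in> S) \<and>
     (\<forall>c. \<forall>X\<in>S. smat c X \<in> S) \<and> (\<forall>X\<in>S. \<forall>Y\<in>S. jprod X Y \<in> S)"

definition jordan_algebra_on :: "('a::field ^'n::finite ^'n) set \<Rightarrow> bool" where
  "jordan_algebra_on S \<longleftrightarrow> (\<forall>X\<in>S. \<forall>Y\<in>S. jprod X Y = jprod Y X \<and>
     jprod (jprod (jprod X X) Y) X = jprod (jprod X X) (jprod Y X))"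

definition iso_to_field :: "('a::field ^'n::finite ^'n) set \<Rightarrow> bool" where
  "iso_to_field S \<longleftrightarrow> (\<exists>\<phi>. bij_betw \<phi> S (UNIV :: 'a set) \<and>
     (\<forall>X\<in>S. \<forall>Y\<in>S. \<phi> (X + Y) = \<phi> X + \<phi> Y) \<and>
     (\<forall>c. \<forall>X\<in>S. \<phi> (smat c X) = c * \<phi> X) \<and>
     (\<forall>X\<in>S. \<forall>Y\<in>S. \<phi> (jprod X Y) = \<phi> X * \<phi> Y))"

definition mdeg :: "('n::finite \<Rightarrow>\<^sub>0 nat) \<Rightarrow> nat" where
  "mdeg \<alpha> = (\<Sum>v\<in>UNIV. Poly_Mapping.lookup \<alpha> v)"

definition meval :: "('v, 'a::comm_ring_1) mpoly \<Rightarrow> ('v \<Rightarrow> 'a) \<Rightarrow> 'a" where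
  "meval P c = (\<Sum>\<mu>\<in>Poly_Mapping.keys P. Poly_Mapping.lookup P \<mu> * (\<Prod>v\<in>Poly_Mapping.keys \<mu>. c v ^ Poly_Mapping.lookup \<mu> v))"

text \<open>Coefficient variables for m polynomials of degrees d 0, ..., d (m-1): pairs (i, alpha)
  with i < m and alpha a monomial of total degree at most d i.\<close>
definition coeff_vars :: "nat \<Rightarrow> (nat \<Rightarrow> nat) \<Rightarrow> (nat \<times> ('n::finite \<Rightarrow>\<^sub>0 nat)) set" where
  "coeff_vars m d = {(i, \<alpha>). i < m \<and> mdeg \<alpha> \<le> d i}"

definition polys_of_coeffs :: "(nat \<Rightarrow> nat) \<Rightarrow> (nat \<times> ('n::finite \<Rightarrow>\<^sub>0 nat) \<Rightarrow> 'a::zero)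
    \<Rightarrow> nat \<Rightarrow> ('n, 'a) mpoly" where
  "polys_of_coeffs d c i = Abs_poly_mapping (\<lambda>\<alpha>. if mdeg \<alpha> \<le> d i then c (i, \<alpha>) else 0)"

end

theory Submission
  imports Defs
begin

text \<open>
  The Hessian H of a polynomial is symmetric, so the condition (H X)^T = H X says that X is
  self-adjoint for the bilinear form H. Self-adjoint matrices form a linear space that is
  closed under X Y + Y X, and the Jordan identity holds in the whole matrix algebra; this is part
  (1), and it needs no assumption on the characteristic.

  For part (2) fix a variable z and an f_i of degree at least 3. Comparing the coefficients of
  1, x_z and x_p (p \<noteq> z) on both sides of (H X)^T = H X yields n^2 - 1 linear equations in the
  entries of X whose coefficients are linear in the coefficients of f_i. Together with the
  equation X_zz = 0 they form a square system, and its determinant P is a polynomial in the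
  coefficients. Where P does not vanish, the only X \<in> Z with X_zz = 0 is 0, hence Z = k I,
  which is isomorphic to k. P is not the zero polynomial because it does not vanish at the
  coefficients of \<Sum>_v x_v^2 + x_z \<Sum>_(v \<noteq> z) x_v^2.
\<close>

section \<open>Jordan algebras of self-adjoint matrices\<close>

lemma finite_shifted_keys: "finite K \<Longrightarrow> finite {\<alpha>. \<alpha> + s \<in> K}"
  for s :: "'n \<Rightarrow>\<^sub>0 nat"
  using finite_vimageI[of K "\<lambda>\<alpha>. \<alpha> + s"] by (simp add: inj_on_def vimage_def)

lemma lookup_pdiff:
  "Poly_Mapping.lookup (pdiff i p) \<alpha> =
     of_nat (Poly_Mapping.lookup \<alpha> i + 1) * Poly_Mapping.lookup p (\<alpha> + Poly_Mapping.single i 1)"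
proof -
  have "finite {\<alpha>. of_nat (Poly_Mapping.lookup \<alpha> i + 1) *
          Poly_Mapping.lookup p (\<alpha> + Poly_Mapping.single i 1) \<noteq> 0}"
    by (rule finite_subset[OF _ finite_shifted_keys[OF finite_keys[of p], where s = "Poly_Mapping.single i 1"]])
       (auto simp: in_keys_iff)
  then show ?thesis unfolding pdiff_def by simp
qed

lemma pdiff_commute: "pdiff i (pdiff j p) = pdiff j (pdiff i p)"
proof (cases "i = j")
  case False
  then show ?thesis
    by (intro poly_mapping_eqI)
       (simp add: lookup_pdiff lookup_add lookup_single add_ac mult.left_commute)
qed simp

lemma transpose_hessian: "transpose (hessian f) = hessian f"
  by (simp add: transpose_def hessian_def vec_eq_iff pdiff_commute)

definition self_adjoint_wrt :: "'a::comm_ring_1^'n^'n \<Rightarrow> ('a^'n^'n) set" where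
  "self_adjoint_wrt H = {A. transpose (H ** A) = H ** A}"

lemma transpose_add: "transpose (A + B) = transpose A + transpose B"
  by (simp add: transpose_def vec_eq_iff)

lemma transpose_smat: "transpose (smat c A) = smat c (transpose A)"
  by (simp add: transpose_def smat_def vec_eq_iff)

lemma smat_add: "smat (c::'a::comm_ring_1) (A + B) = smat c A + smat c B"
  by (simp add: smat_def vec_eq_iff distrib_left)

lemma smat_smat: "smat (c::'a::comm_ring_1) (smat d A) = smat (c * d) A"
  by (simp add: smat_def vec_eq_iff mult_ac)

lemma matrix_mul_smat_left: "smat (c::'a::comm_ring_1) A ** B = smat c (A ** B)"
  by (simp add: smat_def vec_eq_iff matrix_matrix_mult_def sum_distrib_left mult_ac)

lemma matrix_mul_smat_right: "A ** smat (c::'a::comm_ring_1) B = smat c (A ** B)"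
  by (simp add: smat_def vec_eq_iff matrix_matrix_mult_def sum_distrib_left mult_ac)

lemma matrix_add_rdistrib: "(A + B) ** C = A ** C + B ** C"
  by (simp add: matrix_matrix_mult_def vec_eq_iff distrib_right sum.distrib)

lemma self_adjoint_wrt_zero: "0 \<in> self_adjoint_wrt H"
  by (simp add: self_adjoint_wrt_def transpose_def vec_eq_iff)

lemma self_adjoint_wrt_one: "transpose H = H \<Longrightarrow> mat 1 \<in> self_adjoint_wrt H"
  by (simp add: self_adjoint_wrt_def)

lemma self_adjoint_wrt_add:
  "A \<in> self_adjoint_wrt H \<Longrightarrow> B \<in> self_adjoint_wrt H \<Longrightarrow> A + B \<in> self_adjoint_wrt H"
  by (simp add: self_adjoint_wrt_def matrix_add_ldistrib transpose_add)

lemma self_adjoint_wrt_smat: "A \<in> self_adjoint_wrt H \<Longrightarrow> smat c A \<in> self_adjoint_wrt H"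
  by (simp add: self_adjoint_wrt_def matrix_mul_smat_right transpose_smat)

lemma self_adjoint_wrt_anticommutator:
  assumes H: "transpose H = H" and A: "A \<in> self_adjoint_wrt H" and B: "B \<in> self_adjoint_wrt H"
  shows "A ** B + B ** A \<in> self_adjoint_wrt H"
proof -
  have swap: "transpose (H ** (X ** Y)) = H ** (Y ** X)"
    if "transpose (H ** X) = H ** X" "transpose (H ** Y) = H ** Y" for X Y
  proof -
    have "transpose (H ** (X ** Y)) = transpose Y ** (transpose X ** transpose H)"
      by (simp add: matrix_transpose_mul matrix_mul_assoc)
    also have "\<dots> = (transpose Y ** transpose H) ** X"
      using that(1) H by (simp add: matrix_transpose_mul matrix_mul_assoc)
    also have "\<dots> = H ** (Y ** X)"
      using that(2) by (simp add: matrix_transpose_mul matrix_mul_assoc)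
    finally show ?thesis .
  qed
  from A B show ?thesis
    by (simp add: self_adjoint_wrt_def matrix_add_ldistrib transpose_add swap add.commute)
qed

lemma mconst_add: "mconst (a + b) = mconst a + mconst b"
  by (simp add: mconst_def single_add)

lemma mconst_mult: "mconst (a * b) = mconst a * mconst b"
  by (simp add: mconst_def mult_single)

lemma mconst_sum: "mconst (sum g S) = (\<Sum>x\<in>S. mconst (g x))"
  by (rule sym, rule sum_comp_morphism[of mconst g S, unfolded o_def])
     (simp_all add: mconst_def single_add)

lemma const_mat_add: "const_mat (X + Y) = const_mat X + const_mat Y"
  by (simp add: const_mat_def vec_eq_iff mconst_add)

lemma const_mat_zero: "const_mat 0 = 0"
  by (simp add: const_mat_def vec_eq_iff mconst_def)

lemma const_mat_one: "const_mat (mat 1) = mat 1"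
  by (simp add: const_mat_def mat_def vec_eq_iff mconst_def)

lemma const_mat_mult: "const_mat (X ** Y) = const_mat X ** const_mat Y"
  by (simp add: const_mat_def vec_eq_iff matrix_matrix_mult_def mconst_sum mconst_mult)

lemma const_mat_smat: "const_mat (smat c X) = smat (mconst c) (const_mat X)"
  by (simp add: const_mat_def smat_def vec_eq_iff mconst_mult)

lemma Zset_eq: "Zset m f = {X. \<forall>i<m. const_mat X \<in> self_adjoint_wrt (hessian (f i))}"
  by (simp add: Zset_def self_adjoint_wrt_def)

lemma jprod_eq_smat: "jprod X Y = smat (inverse 2) (X ** Y + Y ** X)"
  by (simp add: jprod_def smat_def vec_eq_iff field_simps)

lemma jprod_commute: "jprod X Y = jprod Y X"
  by (simp add: jprod_def add.commute)

lemma jprod_jprod_commuting: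
  assumes "X ** P = P ** X"
  shows "jprod (jprod P Y) X = jprod P (jprod Y X)"
proof -
  have "Y ** P ** X = Y ** X ** P" "X ** P ** Y = P ** X ** Y"
    using assms by (simp_all flip: matrix_mul_assoc)
  then have "(P ** Y + Y ** P) ** X + X ** (P ** Y + Y ** P)
      = P ** (Y ** X + X ** Y) + (Y ** X + X ** Y) ** P"
    by (simp add: matrix_add_ldistrib matrix_add_rdistrib matrix_mul_assoc add_ac)
  then show ?thesis
    by (simp add: jprod_eq_smat matrix_mul_smat_left matrix_mul_smat_right flip: smat_add)
qed

lemma jordan_algebra_on_matrices: "jordan_algebra_on S"
proof -
  have "X ** jprod X X = jprod X X ** X" for X :: "'a::field^'n::finite^'n"
    by (simp only: jprod_eq_smat matrix_mul_smat_left matrix_mul_smat_right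
        matrix_add_ldistrib matrix_add_rdistrib matrix_mul_assoc)
  then show ?thesis
    unfolding jordan_algebra_on_def using jprod_commute jprod_jprod_commuting by blast
qed

lemma jordan_subalgebra_Zset: "jordan_subalgebra (Zset m f)"
  unfolding jordan_subalgebra_def jprod_eq_smat
  by (simp add: Zset_eq const_mat_zero const_mat_add const_mat_mult const_mat_smat
      self_adjoint_wrt_zero self_adjoint_wrt_add self_adjoint_wrt_smat
      self_adjoint_wrt_anticommutator transpose_hessian)

lemma iso_to_field_scalar_matrices:
  assumes "(2::'a::field) \<noteq> 0"
  shows "iso_to_field (range (\<lambda>t. smat t (mat 1)) :: ('a^'n::finite^'n) set)"
  unfolding iso_to_field_def
proof (intro exI conjI ballI allI)
  let ?z = "undefined :: 'n"
  let ?\<phi> = "\<lambda>X::'a^'n^'n. X $ ?z $ ?z"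
  have diag: "?\<phi> (smat t (mat 1)) = t" for t
    by (simp add: smat_def mat_def)
  show "bij_betw ?\<phi> (range (\<lambda>t. smat t (mat 1))) UNIV"
    by (rule bij_betw_byWitness[where f' = "\<lambda>t. smat t (mat 1)"]) (auto simp: diag)
  show "?\<phi> (X + Y) = ?\<phi> X + ?\<phi> Y" "?\<phi> (smat c X) = c * ?\<phi> X" for X Y c
    by (simp_all add: smat_def)
  fix X Y :: "'a^'n^'n"
  assume "X \<in> range (\<lambda>t. smat t (mat 1))" "Y \<in> range (\<lambda>t. smat t (mat 1))"
  then obtain s t where X: "X = smat s (mat 1)" and Y: "Y = smat t (mat 1)" by blast
  have "jprod X Y = smat (inverse 2) (smat (s * t) (mat 1) + smat (t * s) (mat 1))"
    unfolding X Y jprod_eq_smat by (simp only: matrix_mul_smat_left matrix_mul_smat_right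
        smat_smat matrix_mul_lid mult.commute[of t])
  also have "\<dots> = smat (s * t) (mat 1)"
    using assms by (simp add: smat_def vec_eq_iff field_simps)
  finally show "?\<phi> (jprod X Y) = ?\<phi> X * ?\<phi> Y"
    by (simp add: X Y diag)
qed

section \<open>Polynomials in the coefficients\<close>

lemma det_closed:
  fixes A :: "'a::comm_ring_1^'n::finite^'n"
  assumes "P 0" "P 1"
    and "\<And>x y. P x \<Longrightarrow> P y \<Longrightarrow> P (x + y)" "\<And>x. P x \<Longrightarrow> P (- x)"
    and "\<And>x y. P x \<Longrightarrow> P y \<Longrightarrow> P (x * y)" "\<And>i j. P (A $ i $ j)"
  shows "P (det A)"
proof -
  have sum: "P (sum g S)" if "\<And>x. P (g x)" for g and S :: "('n \<Rightarrow> 'n) set"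
    using that assms(1,3) by (induction S rule: infinite_finite_induct) auto
  have prod: "P (prod g S)" if "\<And>x. P (g x)" for g and S :: "'n set"
    using that assms(2,5) by (induction S rule: infinite_finite_induct) auto
  have sign: "P (of_int (sign p))" for p :: "'n \<Rightarrow> 'n"
    by (cases p rule: sign_cases) (simp_all add: assms(2,4))
  show ?thesis
    unfolding det_def by (intro sum assms(5) sign prod assms(6))
qed

lemma det_map_hom:
  fixes A :: "'a::comm_ring_1^'n::finite^'n" and h :: "'a \<Rightarrow> 'b::comm_ring_1"
  assumes "h 0 = 0" "h 1 = 1" "\<And>x y. h (x + y) = h x + h y" "\<And>x y. h (x * y) = h x * h y"
  shows "h (det A) = det (\<chi> i j. h (A $ i $ j))"
proof -
  have minus: "h (- x) = - h x" for x
    using assms(3)[of x "- x"] assms(1) by (simp add: eq_neg_iff_add_eq_0 add.commute)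
  have sum: "h (sum g S) = (\<Sum>x\<in>S. h (g x))" for g and S :: "'c set"
    using assms(1,3) by (induction S rule: infinite_finite_induct) auto
  have prod: "h (prod g S) = (\<Prod>x\<in>S. h (g x))" for g and S :: "'c set"
    using assms(2,4) by (induction S rule: infinite_finite_induct) auto
  have sign: "h (of_int (sign p)) = of_int (sign p)" for p :: "'n \<Rightarrow> 'n"
    by (cases p rule: sign_cases) (simp_all add: assms(2) minus)
  show ?thesis
    unfolding det_def by (simp add: sum prod sign assms(4))
qed

definition monomial_value :: "('v \<Rightarrow>\<^sub>0 nat) \<Rightarrow> ('v \<Rightarrow> 'a::comm_ring_1) \<Rightarrow> 'a" where
  "monomial_value \<mu> c = (\<Prod>v\<in>Poly_Mapping.keys \<mu>. c v ^ Poly_Mapping.lookup \<mu> v)"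

lemma monomial_value_superset:
  assumes "finite S" "Poly_Mapping.keys \<mu> \<subseteq> S"
  shows "monomial_value \<mu> c = (\<Prod>v\<in>S. c v ^ Poly_Mapping.lookup \<mu> v)"
  unfolding monomial_value_def
  by (rule prod.mono_neutral_left[OF assms]) (auto simp: in_keys_iff)

lemma monomial_value_add:
  "monomial_value (\<mu> + \<nu>) c = monomial_value \<mu> c * monomial_value \<nu> c"
proof -
  let ?S = "Poly_Mapping.keys \<mu> \<union> Poly_Mapping.keys \<nu>"
  have "Poly_Mapping.keys (\<mu> + \<nu>) \<subseteq> ?S" by (rule keys_add)
  then show ?thesis
    by (simp add: monomial_value_superset[of ?S] lookup_add power_add prod.distrib)
qed

lemma meval_superset:
  assumes "finite S" "Poly_Mapping.keys P \<subseteq> S"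
  shows "meval P c = (\<Sum>\<mu>\<in>S. Poly_Mapping.lookup P \<mu> * monomial_value \<mu> c)"
  unfolding meval_def monomial_value_def
  by (rule sum.mono_neutral_left[OF assms]) (auto simp: in_keys_iff)

lemma meval_single: "meval (Poly_Mapping.single \<mu> a) c = a * monomial_value \<mu> c"
  by (subst meval_superset[of "{\<mu>}"]) auto

definition var :: "'v \<Rightarrow> 'v \<Rightarrow>\<^sub>0 nat" where
  "var v = Poly_Mapping.single v 1"

lemma lookup_var: "Poly_Mapping.lookup (var a) v = (if a = v then 1 else 0)"
  by (simp add: var_def lookup_single when_def)

lemma meval_var: "meval (Poly_Mapping.single (var v) a) c = a * c v"
  by (simp add: meval_single monomial_value_def var_def)

lemma meval_add: "meval (P + Q) c = meval P c + meval Q c"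
proof -
  let ?S = "Poly_Mapping.keys P \<union> Poly_Mapping.keys Q"
  have "Poly_Mapping.keys (P + Q) \<subseteq> ?S" by (rule keys_add)
  then show ?thesis
    by (simp add: meval_superset[of ?S] lookup_add distrib_right sum.distrib)
qed

lemma meval_zero: "meval 0 c = 0"
  by (simp add: meval_def)

lemma meval_sum: "meval (sum g S) c = (\<Sum>x\<in>S. meval (g x) c)"
  by (induction S rule: infinite_finite_induct) (auto simp: meval_zero meval_add)

lemma sum_single_lookup:
  "P = (\<Sum>\<mu>\<in>Poly_Mapping.keys P. Poly_Mapping.single \<mu> (Poly_Mapping.lookup P \<mu>))"
  by (rule poly_mapping_eqI) (auto simp: lookup_sum lookup_single when_def in_keys_iff)

lemma meval_mult: "meval (P * Q) c = meval P c * meval Q c"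
proof -
  let ?K = "Poly_Mapping.keys" and ?l = "Poly_Mapping.lookup" and ?s = "Poly_Mapping.single"
  have "P * Q = (\<Sum>\<mu>\<in>?K P. ?s \<mu> (?l P \<mu>)) * (\<Sum>\<nu>\<in>?K Q. ?s \<nu> (?l Q \<nu>))"
    by (simp flip: sum_single_lookup)
  also have "\<dots> = (\<Sum>\<mu>\<in>?K P. \<Sum>\<nu>\<in>?K Q. ?s (\<mu> + \<nu>) (?l P \<mu> * ?l Q \<nu>))"
    by (simp add: sum_distrib_left sum_distrib_right mult_single) (rule sum.swap)
  finally have "meval (P * Q) c =
      (\<Sum>\<mu>\<in>?K P. \<Sum>\<nu>\<in>?K Q. ?l P \<mu> * ?l Q \<nu> * (monomial_value \<mu> c * monomial_value \<nu> c))"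
    by (simp add: meval_sum meval_single monomial_value_add)
  also have "\<dots> = meval P c * meval Q c"
    by (simp add: meval_def monomial_value_def sum_product mult_ac)
  finally show ?thesis .
qed

lemma meval_one: "meval 1 c = 1"
  using meval_single[of 0 1 c] by (simp add: monomial_value_def)

lemma meval_det: "meval (det A) c = det (\<chi> i j. meval (A $ i $ j) c)"
  by (rule det_map_hom) (simp_all add: meval_zero meval_one meval_add meval_mult)

lemma meval_diff: "meval (P - Q) c = meval P c - meval Q c"
  using meval_add[of "P - Q" Q c] by simp

definition vars_within :: "'v set \<Rightarrow> ('v, 'a::zero) mpoly \<Rightarrow> bool" where
  "vars_within V p \<longleftrightarrow> (\<forall>\<mu>\<in>Poly_Mapping.keys p. Poly_Mapping.keys \<mu> \<subseteq> V)"

lemma vars_within_zero: "vars_within V 0"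
  by (simp add: vars_within_def)

lemma vars_within_one: "vars_within V 1"
  by (simp add: vars_within_def)

lemma vars_within_add: "vars_within V p \<Longrightarrow> vars_within V q \<Longrightarrow> vars_within V (p + q)"
  unfolding vars_within_def using keys_add[of p q] by blast

lemma vars_within_uminus: "vars_within V p \<Longrightarrow> vars_within V (- p)"
  by (simp add: vars_within_def)

lemma vars_within_diff:
  fixes p q :: "('v, 'a::ab_group_add) mpoly"
  shows "vars_within V p \<Longrightarrow> vars_within V q \<Longrightarrow> vars_within V (p - q)"
  using vars_within_add[of V p "- q"] vars_within_uminus[of V q] by simp

lemma vars_within_mult:
  assumes "vars_within V p" "vars_within V q"
  shows "vars_within V (p * q)"
  unfolding vars_within_def
proof
  fix \<mu> assume "\<mu> \<in> Poly_Mapping.keys (p * q)"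
  then obtain \<alpha> \<beta> where "\<mu> = \<alpha> + \<beta>" "\<alpha> \<in> Poly_Mapping.keys p" "\<beta> \<in> Poly_Mapping.keys q"
    using keys_mult by blast
  then show "Poly_Mapping.keys \<mu> \<subseteq> V"
    using assms keys_add[of \<alpha> \<beta>] unfolding vars_within_def by blast
qed

lemma vars_within_det:
  "(\<And>i j. vars_within V (A $ i $ j)) \<Longrightarrow> vars_within V (det A)"
  by (rule det_closed) (simp_all add: vars_within_zero vars_within_one vars_within_add
      vars_within_uminus vars_within_mult)

section \<open>Generic coefficients\<close>

lemma mdeg_add: "mdeg (\<alpha> + \<beta>) = mdeg \<alpha> + mdeg \<beta>"
  by (simp add: mdeg_def lookup_add sum.distrib)

lemma mdeg_single: "mdeg (Poly_Mapping.single (v::'n::finite) k) = k"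
  by (simp add: mdeg_def lookup_single when_def)

lemma mdeg_var: "mdeg (var (v::'n::finite)) = 1"
  by (simp add: var_def mdeg_single)

lemma finite_mdeg_le: "finite {\<alpha>::'n::finite \<Rightarrow>\<^sub>0 nat. mdeg \<alpha> \<le> D}"
proof -
  have "Poly_Mapping.lookup \<alpha> v \<le> mdeg \<alpha>" for \<alpha> :: "'n \<Rightarrow>\<^sub>0 nat" and v
    unfolding mdeg_def by (rule member_le_sum) auto
  then have "{\<alpha>::'n \<Rightarrow>\<^sub>0 nat. mdeg \<alpha> \<le> D} \<subseteq> Poly_Mapping.lookup -` PiE UNIV (\<lambda>_. {..D})"
    by (auto simp: PiE_def intro: le_trans)
  moreover have "finite (Poly_Mapping.lookup -` PiE (UNIV::'n set) (\<lambda>_. {..D}))"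
    by (rule finite_vimageI) (auto simp: finite_PiE inj_on_def)
  ultimately show ?thesis by (rule finite_subset)
qed

lemma lookup_polys_of_coeffs:
  "Poly_Mapping.lookup (polys_of_coeffs d c i) \<alpha> = (if mdeg \<alpha> \<le> d i then c (i, \<alpha>) else 0)"
proof -
  have "finite {\<alpha>. (if mdeg \<alpha> \<le> d i then c (i, \<alpha>) else 0) \<noteq> 0}"
    by (rule finite_subset[OF _ finite_mdeg_le[of "d i"]]) auto
  then show ?thesis unfolding polys_of_coeffs_def by simp
qed

definition hessian_coeff ::
    "nat \<Rightarrow> (nat \<times> ('n \<Rightarrow>\<^sub>0 nat) \<Rightarrow> 'a::comm_ring_1) \<Rightarrow> 'n \<Rightarrow> 'n \<Rightarrow> ('n \<Rightarrow>\<^sub>0 nat) \<Rightarrow> 'a" where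
  "hessian_coeff i c a k \<beta> =
     of_nat (Poly_Mapping.lookup \<beta> a + 1) * of_nat (Poly_Mapping.lookup (\<beta> + var a) k + 1) *
     c (i, \<beta> + var a + var k)"

lemma lookup_hessian_polys_of_coeffs:
  assumes "mdeg \<beta> + 2 \<le> d i"
  shows "Poly_Mapping.lookup (hessian (polys_of_coeffs d c i) $ a $ k) \<beta> = hessian_coeff i c a k \<beta>"
  using assms by (simp add: hessian_def lookup_pdiff lookup_polys_of_coeffs hessian_coeff_def
      mdeg_add mdeg_single var_def mult.assoc)

definition hessian_coeff_poly ::
    "nat \<Rightarrow> 'n \<Rightarrow> 'n \<Rightarrow> ('n \<Rightarrow>\<^sub>0 nat) \<Rightarrow> (nat \<times> ('n \<Rightarrow>\<^sub>0 nat), 'a::comm_ring_1) mpoly" where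
  "hessian_coeff_poly i a k \<beta> = Poly_Mapping.single (var (i, \<beta> + var a + var k))
     (of_nat (Poly_Mapping.lookup \<beta> a + 1) * of_nat (Poly_Mapping.lookup (\<beta> + var a) k + 1))"

lemma meval_hessian_coeff_poly: "meval (hessian_coeff_poly i a k \<beta>) c = hessian_coeff i c a k \<beta>"
  by (simp only: hessian_coeff_poly_def meval_var) (simp add: hessian_coeff_def)

text \<open>
  Read g a k \<beta> as the coefficient of x^\<beta> in H_ak. Applied to the flattened X, row r \<noteq> (z, z) of
  equation_matrix g z computes the coefficient of x^\<beta> in (H X)_ab - (H X)_ba, where
  (a, b, \<beta>) = equation_index z r, and row (z, z) reads off X_zz. Only monomials \<beta> of degree at
  most 1 occur, so only coefficients of degree at most 3 of f_i enter.
\<close>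

definition equation_index :: "'n \<Rightarrow> 'n \<times> 'n \<Rightarrow> 'n \<times> 'n \<times> ('n \<Rightarrow>\<^sub>0 nat)" where
  "equation_index z r = (case r of (p, q) \<Rightarrow>
     if p = z then (z, q, 0) else if q = z then (p, z, var z) else (z, q, var p))"

definition equation_matrix ::
    "('n::finite \<Rightarrow> 'n \<Rightarrow> ('n \<Rightarrow>\<^sub>0 nat) \<Rightarrow> 'b::comm_ring_1) \<Rightarrow> 'n \<Rightarrow> 'b^('n \<times> 'n)^('n \<times> 'n)" where
  "equation_matrix g z = (\<chi> r s. if r = (z, z) then (if s = (z, z) then 1 else 0) else
     (case equation_index z r of (a, b, \<beta>) \<Rightarrow>
        (if snd s = b then g a (fst s) \<beta> else 0) - (if snd s = a then g b (fst s) \<beta> else 0)))"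

lemma equation_matrix_row_diag: "(equation_matrix g z *v x) $ (z, z) = x $ (z, z)"
  by (simp add: equation_matrix_def matrix_vector_mult_def if_distrib[of "\<lambda>u. u * _"]
      cong: if_cong)

lemma sum_pairs_with_snd:
  "(\<Sum>s\<in>UNIV. if snd s = b then f s else 0) = (\<Sum>k\<in>UNIV. f (k, b))"
  for f :: "'n::finite \<times> 'm::finite \<Rightarrow> 'a::comm_monoid_add"
proof -
  have "(\<Sum>s\<in>UNIV. if snd s = b then f s else 0) = sum f {s. snd s = b}"
    using sum.inter_filter[of UNIV f "\<lambda>s. snd s = b"] by simp
  also have "{s. snd s = b} = (\<lambda>k. (k, b)) ` UNIV" by force
  finally show ?thesis by (simp add: sum.reindex inj_on_def)
qed

lemma equation_matrix_row:
  assumes "r \<noteq> (z, z)" "equation_index z r = (a, b, \<beta>)"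
  shows "(equation_matrix g z *v x) $ r =
    (\<Sum>k\<in>UNIV. g a k \<beta> * x $ (k, b)) - (\<Sum>k\<in>UNIV. g b k \<beta> * x $ (k, a))"
  using assms by (simp add: equation_matrix_def matrix_vector_mult_def left_diff_distrib
      sum_subtractf if_distrib[of "\<lambda>u. u * _"] sum_pairs_with_snd cong: if_cong)

text \<open>
  The coefficients of \<Sum>_v x_v^2 + x_z \<Sum>_(v \<noteq> z) x_v^2: the two conditions single out the monomials
  x_v^2 and x_z x_v^2 with v \<noteq> z.
\<close>

definition witness_coeffs :: "'n::finite \<Rightarrow> nat \<times> ('n \<Rightarrow>\<^sub>0 nat) \<Rightarrow> 'a::comm_ring_1" where
  "witness_coeffs z = (\<lambda>(i, \<alpha>).
     if (mdeg \<alpha> = 2 \<and> (\<forall>v. Poly_Mapping.lookup \<alpha> v \<noteq> 1)) \<or>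
        (mdeg \<alpha> = 3 \<and> Poly_Mapping.lookup \<alpha> z = 1 \<and> (\<forall>v. v \<noteq> z \<longrightarrow> Poly_Mapping.lookup \<alpha> v \<noteq> 1))
     then 1 else 0)"

lemma witness_coeffs_quadratic:
  "witness_coeffs z (i, var a + var k) = (if a = k then 1 else 0)"
proof (cases "a = k")
  case True
  then show ?thesis by (simp add: witness_coeffs_def mdeg_add mdeg_var lookup_add lookup_var)
next
  case False
  then have "Poly_Mapping.lookup (var a + var k) a = 1" by (simp add: lookup_add lookup_var)
  then show ?thesis using False by (auto simp: witness_coeffs_def mdeg_add mdeg_var)
qed

lemma witness_coeffs_cubic:
  "witness_coeffs z (i, var u + var v + var w) =
     (if u = z \<and> v = w \<and> v \<noteq> z \<or> v = z \<and> u = w \<and> u \<noteq> z \<or> w = z \<and> u = v \<and> u \<noteq> z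
      then 1 else 0)" (is "_ = (if ?C then 1 else 0)")
proof -
  let ?\<alpha> = "var u + var v + var w"
  have lookup: "Poly_Mapping.lookup ?\<alpha> x =
      (if u = x then 1 else 0) + (if v = x then 1 else 0) + (if w = x then 1 else 0)" for x
    by (simp add: lookup_add lookup_var)
  have "Poly_Mapping.lookup ?\<alpha> z = 1 \<and> (\<forall>x. x \<noteq> z \<longrightarrow> Poly_Mapping.lookup ?\<alpha> x \<noteq> 1) \<longleftrightarrow> ?C"
  proof
    assume "?C"
    then show "Poly_Mapping.lookup ?\<alpha> z = 1 \<and> (\<forall>x. x \<noteq> z \<longrightarrow> Poly_Mapping.lookup ?\<alpha> x \<noteq> 1)"
      unfolding lookup by auto
  next
    assume "Poly_Mapping.lookup ?\<alpha> z = 1 \<and> (\<forall>x. x \<noteq> z \<longrightarrow> Poly_Mapping.lookup ?\<alpha> x \<noteq> 1)"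
    then have "Poly_Mapping.lookup ?\<alpha> z = 1" "\<And>x. x \<noteq> z \<Longrightarrow> Poly_Mapping.lookup ?\<alpha> x \<noteq> 1"
      by auto
    from this(2)[of u] this(2)[of v] this(2)[of w] this(1) show ?C
      unfolding lookup by (auto split: if_splits)
  qed
  then show ?thesis by (simp add: witness_coeffs_def mdeg_add mdeg_var)
qed

lemma hessian_coeff_witness_const:
  "hessian_coeff i (witness_coeffs z) a k 0 = (if k = a then 2 else (0::'a::comm_ring_1))"
  unfolding hessian_coeff_def add_0_left witness_coeffs_quadratic
  by (simp add: lookup_var)

lemma hessian_coeff_witness_linear:
  "hessian_coeff i (witness_coeffs z) a k (var w) =
     (if w = z \<and> a = k \<and> a \<noteq> z \<or> w \<noteq> z \<and> (a = z \<and> k = w \<or> a = w \<and> k = z) then 2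
      else (0::'a::comm_ring_1))"
  unfolding hessian_coeff_def witness_coeffs_cubic
  by (cases "w = z"; cases "a = z"; cases "k = z"; cases "a = k"; cases "a = w"; cases "k = w")
     (simp_all add: lookup_add lookup_var)

lemma equation_matrix_witness_injective:
  fixes x :: "'a::field^('n::finite \<times> 'n)"
  assumes two: "(2::'a) \<noteq> 0"
    and kernel: "equation_matrix (hessian_coeff i (witness_coeffs z)) z *v x = 0"
  shows "x = 0"
proof -
  let ?g = "hessian_coeff i (witness_coeffs z) :: _ \<Rightarrow> _ \<Rightarrow> _ \<Rightarrow> 'a"
  have row: "(\<Sum>k\<in>UNIV. ?g a k \<beta> * x $ (k, b)) = (\<Sum>k\<in>UNIV. ?g b k \<beta> * x $ (k, a))"
    if "r \<noteq> (z, z)" "equation_index z r = (a, b, \<beta>)" for r a b \<beta>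
    using equation_matrix_row[OF that, of ?g x] kernel by simp
  have zz: "x $ (z, z) = 0"
    using equation_matrix_row_diag[of ?g z x] kernel by simp
  have pz: "x $ (p, z) = 0" if "p \<noteq> z" for p
    using row[of "(p, z)" p z "var z"] that two
    by (simp add: equation_index_def hessian_coeff_witness_linear if_distrib[of "\<lambda>u. u * _"]
        cong: if_cong)
  have zq: "x $ (z, q) = 0" if "q \<noteq> z" for q
    using row[of "(z, q)" z q 0] that two pz[OF that]
    by (simp add: equation_index_def hessian_coeff_witness_const if_distrib[of "\<lambda>u. u * _"]
        cong: if_cong)
  have pq: "x $ (p, q) = 0" if "p \<noteq> z" "q \<noteq> z" for p q
    using row[of "(p, q)" z q "var p"] that two zz
    by (simp add: equation_index_def hessian_coeff_witness_linear if_distrib[of "\<lambda>u. u * _"]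
        cong: if_cong)
  show ?thesis
  proof (rule vec_eq_iff[THEN iffD2], intro allI)
    fix s :: "'n \<times> 'n"
    show "x $ s = 0 $ s"
      using zz pz zq pq by (cases s) (metis zero_index)
  qed
qed

lemma lookup_mult_mconst:
  fixes p :: "('n, 'a::comm_ring_1) mpoly"
  shows "Poly_Mapping.lookup (p * mconst x) \<beta> = Poly_Mapping.lookup p \<beta> * x"
proof -
  have "p * mconst x = Poly_Mapping.map ((*) x) p"
    by (simp add: mconst_def mult_map_scale_conv_mult mult.commute)
  then show ?thesis by (simp add: map.rep_eq when_def mult.commute)
qed

lemma lookup_self_adjoint_symmetric:
  assumes "const_mat Y \<in> self_adjoint_wrt H"
  shows "(\<Sum>k\<in>UNIV. Poly_Mapping.lookup (H $ a $ k) \<beta> * Y $ k $ b) =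
         (\<Sum>k\<in>UNIV. Poly_Mapping.lookup (H $ b $ k) \<beta> * Y $ k $ a)"
proof -
  have "transpose (H ** const_mat Y) = H ** const_mat Y"
    using assms by (simp add: self_adjoint_wrt_def)
  from arg_cong[OF this, of "\<lambda>M. M $ a $ b"]
  have "(H ** const_mat Y) $ a $ b = (H ** const_mat Y) $ b $ a"
    by (simp add: transpose_def)
  then have "Poly_Mapping.lookup ((H ** const_mat Y) $ a $ b) \<beta> =
      Poly_Mapping.lookup ((H ** const_mat Y) $ b $ a) \<beta>"
    by simp
  then show ?thesis
    by (simp add: matrix_matrix_mult_def const_mat_def lookup_sum lookup_mult_mconst)
qed

lemma mdeg_equation_index: "equation_index z r = (a, b, \<beta>) \<Longrightarrow> mdeg \<beta> \<le> 1"
  by (auto simp: equation_index_def mdeg_var mdeg_def[of 0] split: prod.splits if_splits)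

lemma equation_matrix_kernel:
  fixes X :: "'a::comm_ring_1^'n::finite^'n"
  assumes X: "X \<in> Zset m (polys_of_coeffs d c)" and i: "i < m" "3 \<le> d i" and Xzz: "X $ z $ z = 0"
  shows "equation_matrix (hessian_coeff i c) z *v (\<chi> s. X $ fst s $ snd s) = 0"
proof (rule vec_eq_iff[THEN iffD2], intro allI)
  fix r :: "'n \<times> 'n"
  show "(equation_matrix (hessian_coeff i c) z *v (\<chi> s. X $ fst s $ snd s)) $ r = 0 $ r"
  proof (cases "r = (z, z)")
    case True
    then show ?thesis using Xzz by (simp add: equation_matrix_row_diag)
  next
    case False
    obtain a b \<beta> where index: "equation_index z r = (a, b, \<beta>)" by (metis prod_cases3)
    have "mdeg \<beta> + 2 \<le> d i" using mdeg_equation_index[OF index] i by simp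
    moreover have "const_mat X \<in> self_adjoint_wrt (hessian (polys_of_coeffs d c i))"
      using X i by (simp add: Zset_eq)
    ultimately show ?thesis
      using lookup_self_adjoint_symmetric[of X "hessian (polys_of_coeffs d c i)" a \<beta> b]
      by (simp add: equation_matrix_row[OF False index] lookup_hessian_polys_of_coeffs)
  qed
qed

lemma det_nonzero_iff_kernel_trivial:
  fixes A :: "'a::field^'n::finite^'n"
  shows "det A \<noteq> 0 \<longleftrightarrow> (\<forall>x. A *v x = 0 \<longrightarrow> x = 0)"
  by (simp add: invertible_det_nz[symmetric] invertible_left_inverse matrix_left_invertible_ker)

lemma Zset_eq_scalar_matrices:
  fixes c :: "nat \<times> ('n::finite \<Rightarrow>\<^sub>0 nat) \<Rightarrow> 'a::field"
  assumes i: "i < m" "3 \<le> d i" and det: "det (equation_matrix (hessian_coeff i c) z) \<noteq> 0"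
  shows "Zset m (polys_of_coeffs d c) = range (\<lambda>t. smat t (mat 1))"
proof -
  let ?Z = "Zset m (polys_of_coeffs d c)"
  have scalar: "smat t (mat 1) \<in> ?Z" for t
    by (simp add: Zset_eq const_mat_smat const_mat_one self_adjoint_wrt_smat self_adjoint_wrt_one
        transpose_hessian)
  have scalar_form: "X = smat (X $ z $ z) (mat 1)" if X: "X \<in> ?Z" for X
  proof -
    define Y where "Y = X + smat (- X $ z $ z) (mat 1)"
    have Y: "Y \<in> ?Z"
      using jordan_subalgebra_Zset[of m "polys_of_coeffs d c"] X scalar
      by (simp add: Y_def jordan_subalgebra_def)
    have "Y $ z $ z = 0" by (simp add: Y_def smat_def mat_def)
    with Y i have "equation_matrix (hessian_coeff i c) z *v (\<chi> s. Y $ fst s $ snd s) = 0"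
      by (rule equation_matrix_kernel)
    with det have flat: "(\<chi> s. Y $ fst s $ snd s) = 0"
      by (simp add: det_nonzero_iff_kernel_trivial)
    have "Y $ p $ q = 0" for p q
      using arg_cong[OF flat, of "\<lambda>v. v $ (p, q)"] by simp
    then have "Y = 0" by (simp add: vec_eq_iff)
    then have "X = - smat (- X $ z $ z) (mat 1)"
      unfolding Y_def by (rule add_eq_0_iff2[THEN iffD1])
    also have "\<dots> = smat (X $ z $ z) (mat 1)"
      by (simp add: smat_def vec_eq_iff)
    finally show ?thesis .
  qed
  show ?thesis
  proof (intro set_eqI iffI)
    fix X assume "X \<in> ?Z"
    then have "X = (\<lambda>t. smat t (mat 1)) (X $ z $ z)" by (rule scalar_form)
    then show "X \<in> range (\<lambda>t. smat t (mat 1))" by (rule image_eqI) simp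
  qed (use scalar in blast)
qed

lemma meval_equation_matrix:
  "(\<chi> r s. meval (equation_matrix g z $ r $ s) c) = equation_matrix (\<lambda>a k \<beta>. meval (g a k \<beta>) c) z"
  by (simp add: equation_matrix_def vec_eq_iff meval_zero meval_one meval_diff split: prod.split)

lemma vars_within_equation_matrix:
  assumes "i < m" "3 \<le> d i"
  shows "vars_within (coeff_vars m d) (equation_matrix (hessian_coeff_poly i) z $ r $ s)"
proof -
  obtain a b \<beta> where index: "equation_index z r = (a, b, \<beta>)" by (metis prod_cases3)
  have entry: "vars_within (coeff_vars m d) (hessian_coeff_poly i u k \<beta>)" for u k
    using assms mdeg_equation_index[OF index]
    by (simp add: hessian_coeff_poly_def vars_within_def var_def coeff_vars_def mdeg_add mdeg_single)
  show ?thesis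
    by (simp add: equation_matrix_def index entry vars_within_diff vars_within_uminus
        vars_within_zero vars_within_one)
qed

lemma generic_Zset_iso_to_field:
  assumes two: "(2::'a) \<noteq> 0" and i: "i < m" "3 \<le> d i"
  obtains P :: "(nat \<times> ('n::finite \<Rightarrow>\<^sub>0 nat), 'a::field) mpoly"
  where "P \<noteq> 0" "vars_within (coeff_vars m d) P"
    and "\<And>c. meval P c \<noteq> 0 \<Longrightarrow> iso_to_field (Zset m (polys_of_coeffs d c))"
proof
  define z :: 'n where "z = undefined"
  let ?P = "det (equation_matrix (hessian_coeff_poly i) z) :: (nat \<times> ('n \<Rightarrow>\<^sub>0 nat), 'a) mpoly"
  have meval_P: "meval ?P c = det (equation_matrix (hessian_coeff i c) z)" for c
    by (simp add: meval_det meval_equation_matrix meval_hessian_coeff_poly)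
  have "meval ?P (witness_coeffs z) \<noteq> 0"
    unfolding meval_P det_nonzero_iff_kernel_trivial
    using equation_matrix_witness_injective[OF two] by blast
  then show "?P \<noteq> 0" by (auto simp: meval_zero)
  show "vars_within (coeff_vars m d) ?P"
    using i by (intro vars_within_det vars_within_equation_matrix)
  show "iso_to_field (Zset m (polys_of_coeffs d c))" if "meval ?P c \<noteq> 0" for c
  proof -
    have "Zset m (polys_of_coeffs d c) = range (\<lambda>t. smat t (mat 1))"
      using i that by (intro Zset_eq_scalar_matrices) (simp_all add: meval_P)
    then show ?thesis using iso_to_field_scalar_matrices[OF two] by simp
  qed
qed

theorem theorem2p5:
  fixes m :: nat
  assumes char_not_2: "(2::'a::field) \<noteq> 0"
  shows "(\<forall>f :: nat \<Rightarrow> ('n::finite, 'a) mpoly.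
            jordan_subalgebra (Zset m f) \<and> jordan_algebra_on (Zset m f))
       \<and> (\<forall>d :: nat \<Rightarrow> nat. (\<exists>i<m. 3 \<le> d i) \<longrightarrow>
            (\<exists>P :: (nat \<times> ('n \<Rightarrow>\<^sub>0 nat), 'a) mpoly.
               P \<noteq> 0 \<and> (\<forall>\<mu>\<in>Poly_Mapping.keys P. Poly_Mapping.keys \<mu> \<subseteq> coeff_vars m d) \<and>
               (\<forall>c. meval P c \<noteq> 0 \<longrightarrow> iso_to_field (Zset m (polys_of_coeffs d c)))))"
proof (intro conjI allI impI)
  show "jordan_subalgebra (Zset m f)" "jordan_algebra_on (Zset m f)"
    for f :: "nat \<Rightarrow> ('n, 'a) mpoly"
    by (rule jordan_subalgebra_Zset, rule jordan_algebra_on_matrices)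
  fix d :: "nat \<Rightarrow> nat"
  assume "\<exists>i<m. 3 \<le> d i"
  then obtain i where i: "i < m" "3 \<le> d i" by blast
  obtain P :: "(nat \<times> ('n \<Rightarrow>\<^sub>0 nat), 'a) mpoly"
    where "P \<noteq> 0" "vars_within (coeff_vars m d) P"
      and "\<And>c. meval P c \<noteq> 0 \<Longrightarrow> iso_to_field (Zset m (polys_of_coeffs d c))"
    using generic_Zset_iso_to_field[where d = d, OF char_not_2 i] by blast
  then show "\<exists>P :: (nat \<times> ('n \<Rightarrow>\<^sub>0 nat), 'a) mpoly.
      P \<noteq> 0 \<and> (\<forall>\<mu>\<in>Poly_Mapping.keys P. Poly_Mapping.keys \<mu> \<subseteq> coeff_vars m d) \<and>
      (\<forall>c. meval P c \<noteq> 0 \<longrightarrow> iso_to_field (Zset m (polys_of_coeffs d c)))"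
    by (auto simp: vars_within_def)
qed

end
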